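(* Let $n\ge1$, $T\ge1$, $\theta\in(0,1]$, and let $C_1,\dots,C_T\in\mathbb{R}^{1\times n}$ be i.i.d. random row vectors such that $C_t=0$ with probability $1-\theta$ and, with probability $\theta$, $C_t$ is uniformly distributed on $\{e_1^\top,\dots,e_n^\top\}$ (the canonical basis vectors of $\mathbb{R}^n$). Let $O_T^\top O_T=\sum_{t=1}^T C_t^\top C_t$. Then for any $\delta\in(0,1)$, if $T\ge\frac{8n}{\theta}\log(\frac n\delta)$, with probability at least $1-2\delta$, $$\frac{\theta T}{2n}I_n\preceq O_T^\top O_T\preceq\frac{2e\theta T}{n}I_n.$$
   Context: $\preceq$ is the Löwner (positive semidefinite) order. *)

theory Defs
  imports "HOL-Probability.Probability"
begin

definition lowner_le :: "real^'n^'n \<Rightarrow> real^'n^'n \<Rightarrow> bool" where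
  "lowner_le A B \<longleftrightarrow> (\<forall>x::real^'n. 0 \<le> x \<bullet> ((B - A) *v x))"

text \<open>For a row vector c (stored as an element of real^'n), the matrix c^T c.\<close>
definition outer_sq :: "real^'n \<Rightarrow> real^'n^'n" where
  "outer_sq c = (\<chi> i j. c $ i * c $ j)"

definition row_law :: "real \<Rightarrow> (real^'n) pmf" where
  "row_law \<theta> = bind_pmf (bernoulli_pmf \<theta>)
     (\<lambda>b. if b then pmf_of_set (range (\<lambda>i::'n. axis i (1::real))) else return_pmf 0)"

end

theory Submission
  imports Defs
begin

(* Almost surely every C_t is 0 or a basis vector, so the Gram matrix is diagonal with entries
   N_i = #{t. C_t = e_i}, each a sum of T independent Bernoulli(theta/n) variables with mean
   mu = theta T / n.  Markov's inequality for exp(s N_i) with s = 1 and s = -1/2 gives the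
   multiplicative Chernoff bounds P(N_i >= 2 e mu) <= exp(-mu/8) and P(N_i <= mu/2) <= exp(-mu/8);
   the hypothesis on T says exactly n exp(-mu/8) <= delta, and a union bound over the 2n tails
   finishes the proof. *)

definition diag_mat :: "('n::finite \<Rightarrow> 'a::zero) \<Rightarrow> 'a^'n^'n" where
  "diag_mat d = (\<chi> i j. if i = j then d i else 0)"

lemma scaleR_mat_1_eq_diag_mat: "(c *\<^sub>R mat 1 :: real^'n^'n) = diag_mat (\<lambda>_. c)"
  by (simp add: diag_mat_def vec_eq_iff mat_def)

lemma diag_mat_diff: "diag_mat a - diag_mat b = diag_mat (\<lambda>i. a i - b i :: 'a::ab_group_add)"
  by (simp add: diag_mat_def vec_eq_iff)

lemma diag_mat_sum:
  "(\<Sum>t\<in>I. diag_mat (d t)) = diag_mat (\<lambda>i. \<Sum>t\<in>I. d t i :: 'a::comm_monoid_add)"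
  by (induction I rule: infinite_finite_induct) (auto simp: diag_mat_def vec_eq_iff sum_component)

lemma diag_mat_mult_vec:
  "diag_mat (d :: 'n::finite \<Rightarrow> 'a::semiring_1) *v x = (\<chi> i. d i * x $ i)"
  by (simp add: diag_mat_def matrix_vector_mult_def vec_eq_iff if_distrib[of "\<lambda>u. u * _"]
      cong: if_cong)

lemma lowner_le_diag_mat:
  assumes "\<And>i. a i \<le> b i"
  shows "lowner_le (diag_mat a :: real^'n::finite^'n) (diag_mat b)"
  unfolding lowner_le_def diag_mat_diff diag_mat_mult_vec
proof
  fix x :: "real^'n"
  have "x \<bullet> (\<chi> i. (b i - a i) * x $ i) = (\<Sum>i\<in>UNIV. (b i - a i) * (x $ i)\<^sup>2)"
    by (simp add: inner_vec_def power2_eq_square mult_ac)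
  also have "\<dots> \<ge> 0"
    using assms by (intro sum_nonneg) auto
  finally show "0 \<le> x \<bullet> (\<chi> i. (b i - a i) * x $ i)" .
qed

lemma closed_lowner_le: "closed {(A :: real^'n::finite^'n, B). lowner_le A B}"
proof -
  have "{(A :: real^'n^'n, B). lowner_le A B}
      = (\<Inter>x. {AB. 0 \<le> x \<bullet> ((snd AB - fst AB) *v x)})"
    by (auto simp: lowner_le_def)
  also have "closed \<dots>"
    unfolding inner_vec_def matrix_vector_mult_def
    by (intro closed_INT ballI closed_Collect_le continuous_intros)
  finally show ?thesis .
qed

lemma pred_lowner_le[measurable]:
  fixes f g :: "'a \<Rightarrow> real^'n::finite^'n"
  assumes [measurable]: "f \<in> borel_measurable M" "g \<in> borel_measurable M"
  shows "Measurable.pred M (\<lambda>\<omega>. lowner_le (f \<omega>) (g \<omega>))"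
proof -
  have "(\<lambda>\<omega>. (f \<omega>, g \<omega>)) -` {(A, B). lowner_le A B} \<inter> space M \<in> sets M"
    by (intro measurable_sets[OF _ borel_closed[OF closed_lowner_le]]) measurable
  then show ?thesis
    by (simp add: pred_def vimage_def Int_def conj_commute)
qed

lemma outer_sq_eq_diag_mat:
  assumes "c \<in> insert 0 (range (\<lambda>k. axis k 1))"
  shows "outer_sq c = diag_mat (\<lambda>i. of_bool (c = axis i 1))"
  using assms by (auto simp: outer_sq_def diag_mat_def vec_eq_iff axis_def axis_eq_axis)

lemma sum_outer_sq_eq_diag_mat:
  assumes "\<And>t. t \<in> I \<Longrightarrow> c t \<in> insert 0 (range (\<lambda>k. axis k 1))"
  shows "(\<Sum>t\<in>I. outer_sq (c t)) = diag_mat (\<lambda>i. \<Sum>t\<in>I. of_bool (c t = axis i 1))"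
  using assms by (simp add: outer_sq_eq_diag_mat diag_mat_sum cong: sum.cong)

lemma continuous_outer_sq: "continuous_on UNIV (outer_sq :: real^'n::finite \<Rightarrow> _)"
  unfolding outer_sq_def[abs_def] by (intro continuous_intros)

lemma borel_measurable_outer_sq[measurable]:
  "(outer_sq :: real^'n::finite \<Rightarrow> _) \<in> borel_measurable borel"
  using continuous_outer_sq by (rule borel_measurable_continuous_onI)

lemma set_pmf_row_law:
  assumes "0 \<le> \<theta>" "\<theta> \<le> 1"
  shows "set_pmf (row_law \<theta> :: (real^'n::finite) pmf) \<subseteq> insert 0 (range (\<lambda>k. axis k 1))"
  using assms by (auto simp: row_law_def set_bind_pmf split: if_splits)

lemma pmf_row_law_axis:
  assumes "0 \<le> \<theta>" "\<theta> \<le> 1"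
  shows "pmf (row_law \<theta>) (axis (k::'n::finite) 1) = \<theta> / CARD('n)"
proof -
  have "card (range (\<lambda>i::'n. axis i (1::real))) = CARD('n)"
    by (simp add: card_image inj_on_def axis_eq_axis)
  then show ?thesis
    using assms by (simp add: row_law_def pmf_bind axis_eq_0_iff)
qed

lemma exp_minus_half_le: "exp (- 1 / 2 :: real) \<le> 5 / 8"
proof -
  have "13 / 8 \<le> exp (1 / 2 :: real)"
    using exp_lower_Taylor_quadratic[of "1 / 2"] by (simp add: power2_eq_square)
  then show ?thesis
    by (simp add: exp_minus field_simps)
qed

context prob_space
begin

context
  fixes X :: "'i \<Rightarrow> 'a \<Rightarrow> real" and I :: "'i set" and p :: real
  assumes finite_I: "finite I" and indep: "indep_vars (\<lambda>_. borel) X I"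
    and zero_one: "\<And>t \<omega>. t \<in> I \<Longrightarrow> \<omega> \<in> space M \<Longrightarrow> X t \<omega> \<in> {0, 1}"
    and prob_one: "\<And>t. t \<in> I \<Longrightarrow> prob {\<omega> \<in> space M. X t \<omega> = 1} = p"
begin

lemma
  shows Bernoulli_sum_mgf_integrable: "integrable M (\<lambda>\<omega>. exp (s * (\<Sum>t\<in>I. X t \<omega>)))"
    and Bernoulli_sum_mgf_le:
      "expectation (\<lambda>\<omega>. exp (s * (\<Sum>t\<in>I. X t \<omega>))) \<le> exp (card I * p * (exp s - 1))"
proof -
  define Y where "Y t \<omega> = exp (s * X t \<omega>)" for t \<omega>
  have X_measurable[measurable]: "X t \<in> borel_measurable M" if "t \<in> I" for t
    using indep that by (auto simp: indep_vars_def)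
  have X_event: "{\<omega> \<in> space M. X t \<omega> = 1} \<in> events" if "t \<in> I" for t
    using X_measurable[OF that] by measurable
  have indep_Y: "indep_vars (\<lambda>_. borel) Y I"
    unfolding Y_def by (rule indep_vars_compose2[OF indep]) measurable
  have Y_eq: "Y t \<omega> = 1 + (exp s - 1) * indicator {\<omega> \<in> space M. X t \<omega> = 1} \<omega>"
    if "t \<in> I" "\<omega> \<in> space M" for t \<omega>
    using zero_one[OF that] that(2) by (auto simp: Y_def)
  have Y_integrable: "integrable M (Y t)" if "t \<in> I" for t
    using that X_event[OF that]
    by (subst Bochner_Integration.integrable_cong[OF refl Y_eq]) (auto simp: emeasure_eq_measure)
  have Y_expectation_le: "expectation (Y t) \<le> exp ((exp s - 1) * p)" if "t \<in> I" for t
  proof -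
    have "expectation (Y t)
        = expectation (\<lambda>\<omega>. 1 + (exp s - 1) * indicator {\<omega> \<in> space M. X t \<omega> = 1} \<omega>)"
      using Y_eq[OF that] by (intro Bochner_Integration.integral_cong) auto
    also have "\<dots> = 1 + (exp s - 1) * p"
      using that X_event[OF that] by (simp add: prob_one prob_space emeasure_eq_measure)
    also have "\<dots> \<le> exp ((exp s - 1) * p)"
      by (simp add: exp_ge_add_one_self)
    finally show ?thesis .
  qed
  have mgf_eq: "(\<lambda>\<omega>. exp (s * (\<Sum>t\<in>I. X t \<omega>))) = (\<lambda>\<omega>. \<Prod>t\<in>I. Y t \<omega>)"
    by (simp add: Y_def exp_sum sum_distrib_left finite_I)
  show "integrable M (\<lambda>\<omega>. exp (s * (\<Sum>t\<in>I. X t \<omega>)))"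
    unfolding mgf_eq by (rule indep_vars_integrable[OF finite_I indep_Y Y_integrable])
  have "expectation (\<lambda>\<omega>. \<Prod>t\<in>I. Y t \<omega>) = (\<Prod>t\<in>I. expectation (Y t))"
    by (rule indep_vars_lebesgue_integral[OF finite_I indep_Y Y_integrable])
  also have "\<dots> \<le> (\<Prod>t\<in>I. exp ((exp s - 1) * p))"
    by (intro prod_mono conjI integral_nonneg_AE Y_expectation_le) (auto simp: Y_def)
  also have "\<dots> = exp (card I * p * (exp s - 1))"
    by (simp add: exp_of_nat_mult[symmetric] mult_ac)
  finally show "expectation (\<lambda>\<omega>. exp (s * (\<Sum>t\<in>I. X t \<omega>))) \<le> exp (card I * p * (exp s - 1))"
    unfolding mgf_eq .
qed

(* Both sides are scaled by s so that a negative s yields a lower-tail bound. *)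
lemma Bernoulli_sum_tail:
  "prob {\<omega> \<in> space M. s * c \<le> s * (\<Sum>t\<in>I. X t \<omega>)}
     \<le> exp (card I * p * (exp s - 1) - s * c)"
proof -
  let ?mgf = "\<lambda>\<omega>. exp (s * (\<Sum>t\<in>I. X t \<omega>))"
  have "prob {\<omega> \<in> space M. s * c \<le> s * (\<Sum>t\<in>I. X t \<omega>)}
      = prob {\<omega> \<in> space M. exp (s * c) \<le> ?mgf \<omega>}"
    by simp
  also have "\<dots> \<le> expectation ?mgf / exp (s * c)"
    using Bernoulli_sum_mgf_integrable
    by (intro integral_Markov_inequality_measure[where A = "space M"]) auto
  also have "\<dots> \<le> exp (card I * p * (exp s - 1)) / exp (s * c)"
    by (intro divide_right_mono Bernoulli_sum_mgf_le) simp
  finally show ?thesis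
    by (simp add: exp_diff)
qed

lemma Bernoulli_sum_mean_nonneg: "0 \<le> card I * p"
  using prob_one[symmetric] by (cases "I = {}") auto

lemma Bernoulli_sum_upper_tail:
  "prob {\<omega> \<in> space M. 2 * exp 1 * (card I * p) \<le> (\<Sum>t\<in>I. X t \<omega>)}
     \<le> exp (- (card I * p) / 8)"
proof -
  have "prob {\<omega> \<in> space M. 2 * exp 1 * (card I * p) \<le> (\<Sum>t\<in>I. X t \<omega>)}
      \<le> exp (card I * p * (exp 1 - 1) - 1 * (2 * exp 1 * (card I * p)))"
    using Bernoulli_sum_tail[of 1] by simp
  also have "\<dots> \<le> exp (- (card I * p) / 8)"
    using Bernoulli_sum_mean_nonneg
      mult_nonneg_nonneg[OF exp_ge_zero Bernoulli_sum_mean_nonneg, of 1]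
    by (simp add: algebra_simps)
  finally show ?thesis .
qed

lemma Bernoulli_sum_lower_tail:
  "prob {\<omega> \<in> space M. (\<Sum>t\<in>I. X t \<omega>) \<le> card I * p / 2} \<le> exp (- (card I * p) / 8)"
proof -
  have "prob {\<omega> \<in> space M. (\<Sum>t\<in>I. X t \<omega>) \<le> card I * p / 2}
      = prob {\<omega> \<in> space M. - 1 / 2 * (card I * p / 2) \<le> - 1 / 2 * (\<Sum>t\<in>I. X t \<omega>)}"
    by (intro arg_cong[where f = prob]) auto
  also have "\<dots> \<le> exp (card I * p * (exp (- 1 / 2) - 1) - (- 1 / 2) * (card I * p / 2))"
    by (rule Bernoulli_sum_tail)
  also have "\<dots> \<le> exp (- (card I * p) / 8)"
    using mult_left_mono[OF exp_minus_half_le Bernoulli_sum_mean_nonneg]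
    by (simp add: algebra_simps)
  finally show ?thesis .
qed

end

end

locale sparse_row_sampling = prob_space M for M :: "'a measure" +
  fixes C :: "nat \<Rightarrow> 'a \<Rightarrow> real^'n::finite" and T :: nat and \<theta> :: real
  assumes \<theta>_pos: "0 < \<theta>" and \<theta>_le_1: "\<theta> \<le> 1"
    and indep_rows: "indep_vars (\<lambda>_. borel) C {1..T}"
    and row_distr: "\<And>t A. t \<in> {1..T} \<Longrightarrow> A \<in> sets borel \<Longrightarrow>
      prob {\<omega> \<in> space M. C t \<omega> \<in> A} = measure_pmf.prob (row_law \<theta>) A"
begin

definition axis_count :: "'n \<Rightarrow> 'a \<Rightarrow> real" where
  "axis_count i \<omega> = (\<Sum>t\<in>{1..T}. of_bool (C t \<omega> = axis i 1))"

lemma row_measurable: "t \<in> {1..T} \<Longrightarrow> C t \<in> borel_measurable M"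
  using indep_rows by (auto simp: indep_vars_def)

lemma axis_count_measurable[measurable]: "axis_count i \<in> borel_measurable M"
  unfolding axis_count_def using row_measurable by measurable

lemma AE_row_in_basis: "AE \<omega> in M. \<forall>t\<in>{1..T}. C t \<omega> \<in> insert 0 (range (\<lambda>k. axis k 1))"
proof (intro AE_finite_allI)
  fix t assume t: "t \<in> {1..T}"
  let ?B = "insert 0 (range (\<lambda>k::'n. axis k (1::real)))"
  have "prob {\<omega> \<in> space M. C t \<omega> \<in> ?B} = measure_pmf.prob (row_law \<theta>) ?B"
    using t by (intro row_distr borel_closed finite_imp_closed) auto
  also have "\<dots> = 1"
    using set_pmf_row_law[where 'n = 'n, OF less_imp_le[OF \<theta>_pos] \<theta>_le_1]
    by (simp add: measure_pmf.prob_eq_1 AE_measure_pmf_iff subset_eq)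
  finally show "AE \<omega> in M. C t \<omega> \<in> ?B"
    by (auto dest: AE_prob_1)
qed simp

lemma AE_gram_eq_diag_mat:
  "AE \<omega> in M. (\<Sum>t\<in>{1..T}. outer_sq (C t \<omega>)) = diag_mat (\<lambda>i. axis_count i \<omega>)"
  unfolding axis_count_def using AE_row_in_basis
  by eventually_elim (intro sum_outer_sq_eq_diag_mat, blast)

lemma prob_row_eq_axis:
  "t \<in> {1..T} \<Longrightarrow> prob {\<omega> \<in> space M. C t \<omega> = axis i 1} = \<theta> / CARD('n)"
  using row_distr[of t "{axis i 1}"] \<theta>_pos \<theta>_le_1
  by (simp add: measure_pmf_single pmf_row_law_axis)

lemma indep_axis_indicators:
  "indep_vars (\<lambda>_. borel) (\<lambda>t \<omega>. of_bool (C t \<omega> = axis i 1) :: real) {1..T}"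
  by (rule indep_vars_compose2[OF indep_rows, where Y = "\<lambda>_ c. of_bool (c = axis i 1)"])
    measurable

lemma axis_count_lower_tail:
  "prob {\<omega> \<in> space M. axis_count i \<omega> \<le> \<theta> * T / (2 * CARD('n))}
     \<le> exp (- \<theta> * T / (8 * CARD('n)))"
  using Bernoulli_sum_lower_tail[OF _ indep_axis_indicators, where p = "\<theta> / CARD('n)"]
    prob_row_eq_axis
  by (simp add: axis_count_def mult_ac)

lemma axis_count_upper_tail:
  "prob {\<omega> \<in> space M. 2 * exp 1 * \<theta> * T / CARD('n) \<le> axis_count i \<omega>}
     \<le> exp (- \<theta> * T / (8 * CARD('n)))"
  using Bernoulli_sum_upper_tail[OF _ indep_axis_indicators, where p = "\<theta> / CARD('n)"]
    prob_row_eq_axis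
  by (simp add: axis_count_def mult_ac)

lemma prob_gram_between_scaled_identities:
  defines "gram \<equiv> \<lambda>\<omega>. \<Sum>t\<in>{1..T}. outer_sq (C t \<omega>)"
  shows "prob {\<omega> \<in> space M.
            lowner_le ((\<theta> * T / (2 * CARD('n))) *\<^sub>R mat 1) (gram \<omega>) \<and>
            lowner_le (gram \<omega>) ((2 * exp 1 * \<theta> * T / CARD('n)) *\<^sub>R mat 1)}
         \<ge> 1 - 2 * CARD('n) * exp (- \<theta> * T / (8 * CARD('n)))"
    (is "prob ?good \<ge> _")
proof -
  define lo where "lo = \<theta> * T / (2 * CARD('n))"
  define hi where "hi = 2 * exp 1 * \<theta> * T / CARD('n)"
  define bad where
    "bad i = {\<omega> \<in> space M. axis_count i \<omega> \<le> lo} \<union> {\<omega> \<in> space M. hi \<le> axis_count i \<omega>}" for i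
  have bad_events: "bad i \<in> events" for i
    unfolding bad_def by measurable
  have gram_measurable[measurable]: "gram \<in> borel_measurable M"
    unfolding gram_def using row_measurable by (intro borel_measurable_sum) measurable
  have "AE \<omega> in M. \<omega> \<in> space M - (\<Union>i. bad i) \<longrightarrow> \<omega> \<in> ?good"
    using AE_gram_eq_diag_mat
  proof eventually_elim
    case (elim \<omega>)
    then show ?case
      by (auto simp: gram_def scaleR_mat_1_eq_diag_mat bad_def lo_def hi_def not_le
          intro!: lowner_le_diag_mat less_imp_le)
  qed
  then have "prob (space M - (\<Union>i. bad i)) \<le> prob ?good"
    by (intro finite_measure_mono_AE) measurable
  moreover have "prob (\<Union>i. bad i) \<le> 2 * CARD('n) * exp (- \<theta> * T / (8 * CARD('n)))"
  proof -
    have "prob (\<Union>i. bad i) \<le> (\<Sum>i\<in>UNIV. prob (bad i))"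
      using bad_events by (intro finite_measure_subadditive_finite) auto
    also have "\<dots> \<le> (\<Sum>i\<in>(UNIV :: 'n set). 2 * exp (- \<theta> * T / (8 * CARD('n))))"
    proof (intro sum_mono)
      fix i
      have "prob (bad i)
          \<le> prob {\<omega> \<in> space M. axis_count i \<omega> \<le> lo} + prob {\<omega> \<in> space M. hi \<le> axis_count i \<omega>}"
        unfolding bad_def by (intro measure_Un_le) measurable
      then show "prob (bad i) \<le> 2 * exp (- \<theta> * T / (8 * CARD('n)))"
        using axis_count_lower_tail[of i] axis_count_upper_tail[of i]
        unfolding lo_def hi_def by linarith
    qed
    finally show ?thesis by simp
  qed
  ultimately show ?thesis
    using bad_events by (subst (asm) prob_compl) auto
qed

end

theorem proposition2:
  fixes M :: "'a measure" and C :: "nat \<Rightarrow> 'a \<Rightarrow> real^'n"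
    and T :: nat and \<theta> \<delta> :: real
  assumes "prob_space M"
    and "T \<ge> 1" and "0 < \<theta>" and "\<theta> \<le> 1"
    and "\<And>t. t \<in> {1..T} \<Longrightarrow> C t \<in> borel_measurable M"
    and "prob_space.indep_vars M (\<lambda>_. borel) C {1..T}"
    and "\<And>t A. t \<in> {1..T} \<Longrightarrow> A \<in> sets borel \<Longrightarrow>
           measure M {\<omega> \<in> space M. C t \<omega> \<in> A} = measure_pmf.prob (row_law \<theta>) A"
    and "0 < \<delta>" and "\<delta> < 1"
    and "real T \<ge> 8 * real CARD('n) / \<theta> * ln (real CARD('n) / \<delta>)"
  shows "measure M {\<omega> \<in> space M.
            lowner_le ((\<theta> * real T / (2 * real CARD('n))) *\<^sub>R mat 1)
                      (\<Sum>t\<in>{1..T}. outer_sq (C t \<omega>)) \<and>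
            lowner_le (\<Sum>t\<in>{1..T}. outer_sq (C t \<omega>))
                      ((2 * exp 1 * \<theta> * real T / real CARD('n)) *\<^sub>R mat 1)}
         \<ge> 1 - 2 * \<delta>"
proof -
  (* T \<ge> 1 and the measurability of the C t are implied by the bound on T and by independence. *)
  interpret sparse_row_sampling M C T \<theta>
    using assms(1,3,4,6,7) by (simp add: sparse_row_sampling_def sparse_row_sampling_axioms_def)
  let ?n = "real CARD('n)"
  have "ln (?n / \<delta>) \<le> \<theta> * T / (8 * ?n)"
    using assms(3,10) by (simp add: field_simps)
  then have "?n / \<delta> \<le> exp (\<theta> * T / (8 * ?n))"
    using assms(8)
    by (metis exp_le_cancel_iff exp_ln divide_pos_pos of_nat_0_less_iff zero_less_card_finite)
  then have "?n * exp (- \<theta> * T / (8 * ?n)) \<le> \<delta>"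
    using assms(8) by (simp add: exp_minus field_simps)
  then show ?thesis
    using prob_gram_between_scaled_identities by simp
qed

end
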